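(* Let $\mathbb{X},\mathbb{Y}$ be finite-dimensional real polyhedral Banach spaces with $\min\{\dim\mathbb{X},\dim\mathbb{Y}\}>1$. Then no rank $1$ operator lies in the relative interior of any edge of the unit ball of $\mathbb{L}(\mathbb{X},\mathbb{Y})$.
   Context: Polyhedral: the closed unit ball has finitely many extreme points; $\mathbb{L}(\mathbb{X},\mathbb{Y})$ carries the operator norm. A convex subset $F$ of the unit sphere is a face of the unit ball if whenever $x_1,x_2$ are unit vectors and $(1-t)x_1+tx_2\in F$ for some $0<t<1$, then $x_1,x_2\in F$; its dimension is $\dim\operatorname{span}\{v-w:v,w\in F\}$. An edge is a face of dimension $1$. *)

theory Defs
  imports "HOL-Analysis.Analysis"
begin

definition polyhedral_space :: "'a::real_normed_vector itself \<Rightarrow> bool" where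
  "polyhedral_space _ \<longleftrightarrow> finite {x::'a. x extreme_point_of (cball 0 1)}"

definition unit_ball_face :: "'a::real_normed_vector set \<Rightarrow> bool" where
  "unit_ball_face F \<longleftrightarrow>
     F \<subseteq> sphere 0 1 \<and> convex F \<and>
     (\<forall>x1 x2 t. norm x1 = 1 \<and> norm x2 = 1 \<and> 0 < t \<and> t < 1 \<and>
                (1 - t) *\<^sub>R x1 + t *\<^sub>R x2 \<in> F \<longrightarrow> x1 \<in> F \<and> x2 \<in> F)"

definition face_dim :: "'a::real_normed_vector set \<Rightarrow> nat" where
  "face_dim F = dim (span {v - w | v w. v \<in> F \<and> w \<in> F})"

definition unit_ball_edge :: "'a::real_normed_vector set \<Rightarrow> bool" where
  "unit_ball_edge F \<longleftrightarrow> unit_ball_face F \<and> face_dim F = 1"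

end

theory Submission imports Defs begin

text \<open>
If \<open>T\<close> lies in the relative interior of an edge, every operator \<open>S\<close> with
\<open>\<parallel>T \<plusminus> S\<parallel> \<le> 1\<close> is parallel to the edge, so all such \<open>S\<close> lie on one line;
it suffices to exhibit two linearly independent ones.
Since \<open>X\<close> is finite-dimensional, its unit ball is the convex hull of its extreme
points, and there are finitely many of them; so \<open>\<parallel>T \<plusminus> \<epsilon>P\<parallel> \<le> 1\<close> for small \<open>\<epsilon>\<close>
as soon as \<open>T e\<close> can be moved both ways along \<open>P e\<close> at each extreme point \<open>e\<close> with
\<open>\<parallel>T e\<parallel> = 1\<close>. If these norming extreme points do not span \<open>X\<close>, take a functional
\<open>h\<close> vanishing on them and \<open>P = h(\<cdot>) z\<close> for two independent \<open>z \<in> Y\<close>. If they span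
\<open>X\<close>, the rank-one operator \<open>T\<close> sends each of them to \<open>\<plusminus>T e\<^sub>0\<close>, and the direction
\<open>D\<close> of the edge satisfies \<open>D e\<^sub>0 \<noteq> 0\<close> for one of them; then \<open>P = k(\<cdot>) D e\<^sub>0\<close> works
for every functional \<open>k\<close>, and \<open>dim X > 1\<close> provides two independent ones.
\<close>

section \<open>Finite-dimensional linear algebra\<close>

text \<open>The library proves \<open>dim_psubset\<close> only inside the locale
  \<open>finite_dimensional_vector_space\<close>, which is interpreted here on a basis extracted from \<open>B\<close>.\<close>

lemma dim_psubset_finite_span:
  fixes S T B :: "'a::real_vector set"
  assumes "finite B" "span B = UNIV" and "span S \<subset> span T"
  shows "dim S < dim T"
proof -
  obtain C where "C \<subseteq> B" "independent C" "B \<subseteq> span C"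
    using maximal_independent_subset by blast
  moreover have "span C = UNIV"
    using span_mono[OF \<open>B \<subseteq> span C\<close>] assms(2) by (simp add: span_span top_unique)
  moreover have "finite C" using \<open>C \<subseteq> B\<close> assms(1) by (rule finite_subset)
  ultimately interpret finite_dimensional_vector_space "scaleR :: real \<Rightarrow> 'a \<Rightarrow> 'a" C
    by unfold_locales (simp_all add: dependent_raw_def span_raw_def)
  show ?thesis
    using dim_psubset[of S T] assms(3) by (simp add: dim_raw_def span_raw_def)
qed

lemma dim_eq_1_imp_span_singleton:
  fixes V :: "'a::real_vector set"
  assumes "dim V = 1"
  obtains d where "d \<noteq> 0" "span V = span {d}"
proof -
  obtain B where "B \<subseteq> V" "independent B" "V \<subseteq> span B" "card B = 1"
    using basis_exists[of V] assms by metis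
  moreover from this obtain d where "B = {d}" by (auto simp: card_1_singleton_iff)
  ultimately show thesis
    by (intro that[of d]) (auto simp: dependent_zero span_eq span_base)
qed

lemma exists_noncollinear_pair:
  assumes "dim (UNIV::'a set) > 1"
  obtains u v :: "'a::real_vector" where "u \<notin> span {v}" "v \<notin> span {u}"
proof -
  obtain B :: "'a set" where B: "independent B" "card B = dim (UNIV::'a set)"
    using basis_exists[of UNIV] by metis
  moreover have "finite B" using B(2) assms card_gt_0_iff by fastforce
  ultimately obtain u v where "u \<in> B" "v \<in> B" "u \<noteq> v"
    using assms card_le_Suc0_iff_eq[of B] by (metis One_nat_def not_le)
  then have "independent {u, v}" by (intro independent_mono[OF B(1)]) auto
  then show thesis
    using \<open>u \<noteq> v\<close> by (intro that) (auto simp: dependent_def insert_Diff_if)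
qed

lemma exists_linear_functional_separating:
  fixes v :: "'a::real_vector"
  assumes "v \<notin> span S"
  obtains h :: "'a \<Rightarrow> real" where "linear h" "h v = 1" "\<forall>x \<in> span S. h x = 0"
proof -
  obtain B where B: "B \<subseteq> S" "independent B" "S \<subseteq> span B"
    using maximal_independent_subset by blast
  have spB: "span B = span S"
    using span_mono[OF B(1)] span_minimal[OF B(3) subspace_span] by blast
  have vB: "v \<notin> B" using assms B(1) span_base by blast
  have "independent (insert v B)"
    using independent_insertI[of v B] B(2) assms spB by simp
  then obtain h :: "'a \<Rightarrow> real" where h: "linear h" "\<forall>x\<in>insert v B. h x = (if x = v then 1 else 0)"
    using linear_independent_extend[of "insert v B" "\<lambda>x. if x = v then 1 else 0"] by blast
  have "\<forall>x \<in> span B. h x = 0"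
    using linear_eq_0_on_span[OF h(1)] h(2) vB by (metis insert_iff)
  then show thesis using that[of h] h spB by simp
qed

lemma span_singleton_norm_eq:
  fixes x x' y :: "'a::real_normed_vector"
  assumes "x \<in> span {y}" "x' \<in> span {y}" "norm x = norm x'"
  shows "x = x' \<or> x = - x'"
proof -
  obtain a b where ab: "x = a *\<^sub>R y" "x' = b *\<^sub>R y"
    using assms(1,2) by (auto simp: span_singleton)
  show ?thesis
  proof (cases "y = 0")
    case False
    then have "\<bar>a\<bar> = \<bar>b\<bar>" using assms(3) ab by simp
    then have "a = b \<or> a = - b" by linarith
    then show ?thesis using ab by auto
  qed (use ab in simp)
qed

section \<open>Minkowski's theorem in finite-dimensional normed spaces\<close>

definition two_sided_directions :: "'a::real_vector set \<Rightarrow> 'a \<Rightarrow> 'a set" where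
  "two_sided_directions S x = {d. \<exists>e>0. x + e *\<^sub>R d \<in> S \<and> x - e *\<^sub>R d \<in> S}"

lemma convex_shorter_step:
  assumes "convex S" "x \<in> S" "x + e *\<^sub>R d \<in> S" "0 \<le> e'" "e' \<le> e"
  shows "x + e' *\<^sub>R d \<in> S"
proof (cases "e = 0")
  case False
  have "x + e' *\<^sub>R d = (1 - e'/e) *\<^sub>R x + (e'/e) *\<^sub>R (x + e *\<^sub>R d)"
    using False by (simp add: algebra_simps)
  also have "\<dots> \<in> S"
    using assms False by (intro convexD) auto
  finally show ?thesis .
qed (use assms in simp)

lemma two_sided_directions_uminus:
  "d \<in> two_sided_directions S x \<Longrightarrow> - d \<in> two_sided_directions S x"
  by (auto simp: two_sided_directions_def)

lemma two_sided_directions_add: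
  assumes "convex S" "x \<in> S"
    and "d1 \<in> two_sided_directions S x" "d2 \<in> two_sided_directions S x"
  shows "d1 + d2 \<in> two_sided_directions S x"
proof -
  obtain e1 e2 where e1: "e1 > 0" "x + e1 *\<^sub>R d1 \<in> S" "x + e1 *\<^sub>R (- d1) \<in> S"
    and e2: "e2 > 0" "x + e2 *\<^sub>R d2 \<in> S" "x + e2 *\<^sub>R (- d2) \<in> S"
    using assms(3,4) by (auto simp: two_sided_directions_def)
  define e where "e = min e1 e2"
  have "e > 0" using e1 e2 by (simp add: e_def)
  have step: "x + e *\<^sub>R d \<in> S" if "x + e' *\<^sub>R d \<in> S" "e \<le> e'" for d e'
    using convex_shorter_step[OF assms(1,2) that(1)] \<open>e > 0\<close> that(2) by simp
  have "x + e *\<^sub>R d1 \<in> S" "x + e *\<^sub>R (- d1) \<in> S" "x + e *\<^sub>R d2 \<in> S" "x + e *\<^sub>R (- d2) \<in> S"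
    using step[OF e1(2)] step[OF e1(3)] step[OF e2(2)] step[OF e2(3)] by (simp_all add: e_def)
  then have "(1/2) *\<^sub>R (x + e *\<^sub>R d1) + (1/2) *\<^sub>R (x + e *\<^sub>R d2) \<in> S"
    "(1/2) *\<^sub>R (x + e *\<^sub>R (- d1)) + (1/2) *\<^sub>R (x + e *\<^sub>R (- d2)) \<in> S"
    by (auto intro!: convexD[OF assms(1)])
  moreover have mid: "(1/2) *\<^sub>R (x + e *\<^sub>R a) + (1/2) *\<^sub>R (x + e *\<^sub>R b) = x + (e/2) *\<^sub>R (a + b)"
    for a b by (simp add: scaleR_add_right flip: scaleR_add_left)
  moreover have "x + (e/2) *\<^sub>R (- d1 + - d2) = x - (e/2) *\<^sub>R (d1 + d2)"
    by (simp add: algebra_simps)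
  ultimately have "x + (e/2) *\<^sub>R (d1 + d2) \<in> S" "x - (e/2) *\<^sub>R (d1 + d2) \<in> S"
    by (simp_all only: mid)
  then show ?thesis
    using \<open>e > 0\<close> unfolding two_sided_directions_def by (intro CollectI exI[of _ "e/2"]) simp
qed

lemma two_sided_directions_scaleR:
  assumes "x \<in> S" "d \<in> two_sided_directions S x"
  shows "c *\<^sub>R d \<in> two_sided_directions S x"
proof (cases "c = 0")
  case True
  then show ?thesis using assms(1) by (auto simp: two_sided_directions_def intro: exI[of _ 1])
next
  case False
  obtain e where e: "e > 0" "x + e *\<^sub>R d \<in> S" "x - e *\<^sub>R d \<in> S"
    using assms(2) by (auto simp: two_sided_directions_def)
  have "x + (e / \<bar>c\<bar>) *\<^sub>R (c *\<^sub>R d) \<in> S \<and> x - (e / \<bar>c\<bar>) *\<^sub>R (c *\<^sub>R d) \<in> S"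
    using e False by (cases "c > 0") (auto simp: algebra_simps)
  then show ?thesis
    using e False by (auto simp: two_sided_directions_def intro!: exI[of _ "e / \<bar>c\<bar>"])
qed

lemma subspace_two_sided_directions:
  assumes "convex S" "x \<in> S"
  shows "subspace (two_sided_directions S x)"
proof -
  have "0 \<in> two_sided_directions S x"
    using assms(2) by (auto simp: two_sided_directions_def intro: exI[of _ 1])
  then show ?thesis
    unfolding subspace_def
    using two_sided_directions_add[OF assms] two_sided_directions_scaleR[OF assms(2)] by blast
qed

lemma two_sided_directions_mono_segment:
  assumes "convex S" "a \<in> S" "x = (1 - u) *\<^sub>R a + u *\<^sub>R b" "0 < u" "u \<le> 1"
  shows "two_sided_directions S b \<subseteq> two_sided_directions S x"
proof
  fix c assume "c \<in> two_sided_directions S b"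
  then obtain e where e: "e > 0" "b + e *\<^sub>R c \<in> S" "b - e *\<^sub>R c \<in> S"
    by (auto simp: two_sided_directions_def)
  have "(1 - u) *\<^sub>R a + u *\<^sub>R (b + e *\<^sub>R c) \<in> S" "(1 - u) *\<^sub>R a + u *\<^sub>R (b - e *\<^sub>R c) \<in> S"
    using assms e by (auto intro!: convexD)
  moreover have "(1 - u) *\<^sub>R a + u *\<^sub>R (b + e *\<^sub>R c) = x + (u * e) *\<^sub>R c"
    "(1 - u) *\<^sub>R a + u *\<^sub>R (b - e *\<^sub>R c) = x - (u * e) *\<^sub>R c"
    using assms(3) by (simp_all add: algebra_simps)
  ultimately have "x + (u * e) *\<^sub>R c \<in> S" "x - (u * e) *\<^sub>R c \<in> S"
    by simp_all
  then show "c \<in> two_sided_directions S x"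
    using e assms by (auto simp: two_sided_directions_def intro!: exI[of _ "u * e"])
qed

lemma bdd_above_line_vimage:
  fixes S :: "'a::real_normed_vector set"
  assumes "bounded S" "d \<noteq> 0"
  shows "bdd_above ((\<lambda>t. x + t *\<^sub>R d) -` S)"
proof -
  obtain B where B: "\<And>y. y \<in> S \<Longrightarrow> norm y \<le> B" using assms(1) by (auto simp: bounded_iff)
  have "t \<le> (B + norm x) / norm d" if "x + t *\<^sub>R d \<in> S" for t
  proof -
    have "t * norm d \<le> norm (t *\<^sub>R d)" using mult_right_mono[of t "\<bar>t\<bar>" "norm d"] by simp
    also have "\<dots> \<le> norm (x + t *\<^sub>R d) + norm x"
      using norm_triangle_ineq4[of "x + t *\<^sub>R d" x] by simp
    also have "\<dots> \<le> B + norm x" using B[OF that] by simp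
    finally show ?thesis using assms(2) by (simp add: field_simps)
  qed
  then show ?thesis by (auto simp: bdd_above_def)
qed

lemma two_sided_directions_drop_at_boundary:
  fixes S :: "'a::real_normed_vector set"
  assumes S: "convex S" "closed S" "bounded S" and "x \<in> S"
    and d: "d \<in> two_sided_directions S x" "d \<noteq> 0"
  obtains t where "t > 0" "x + t *\<^sub>R d \<in> S"
    "two_sided_directions S (x + t *\<^sub>R d) \<subset> two_sided_directions S x"
proof -
  obtain e where e: "e > 0" "x + e *\<^sub>R d \<in> S" "x - e *\<^sub>R d \<in> S"
    using d by (auto simp: two_sided_directions_def)
  define I where "I = (\<lambda>t. x + t *\<^sub>R d) -` S"
  have "closed I"
    unfolding I_def by (rule continuous_closed_vimage[OF S(2)]) (intro continuous_intros)
  have "bdd_above I"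
    unfolding I_def using S(3) d(2) by (rule bdd_above_line_vimage)
  define t where "t = Sup I"
  have "e \<in> I" using e by (simp add: I_def)
  then have "t \<in> I" "e \<le> t"
    using closed_contains_Sup[OF _ \<open>bdd_above I\<close> \<open>closed I\<close>] cSup_upper[OF _ \<open>bdd_above I\<close>]
    by (auto simp: t_def)
  then have "t > 0" "x + t *\<^sub>R d \<in> S" using e by (auto simp: I_def)
  have d_lost: "d \<notin> two_sided_directions S (x + t *\<^sub>R d)"
  proof
    assume "d \<in> two_sided_directions S (x + t *\<^sub>R d)"
    then obtain e' where "e' > 0" "x + t *\<^sub>R d + e' *\<^sub>R d \<in> S"
      by (auto simp: two_sided_directions_def)
    then have "t + e' \<in> I" by (simp add: I_def algebra_simps)
    then have "t + e' \<le> t" unfolding t_def using cSup_upper[OF _ \<open>bdd_above I\<close>] by blast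
    then show False using \<open>e' > 0\<close> by simp
  qed
  define u where "u = e / (t + e)"
  have "u * t - (1 - u) * e = 0"
    using \<open>t > 0\<close> \<open>e > 0\<close> by (simp add: u_def field_simps)
  moreover have "(1 - u) *\<^sub>R (x - e *\<^sub>R d) + u *\<^sub>R (x + t *\<^sub>R d) = x + (u * t - (1 - u) * e) *\<^sub>R d"
    by (simp add: algebra_simps)
  ultimately have "x = (1 - u) *\<^sub>R (x - e *\<^sub>R d) + u *\<^sub>R (x + t *\<^sub>R d)"
    by simp
  then have "two_sided_directions S (x + t *\<^sub>R d) \<subseteq> two_sided_directions S x"
    using \<open>t > 0\<close> \<open>e > 0\<close>
    by (intro two_sided_directions_mono_segment[OF S(1) e(3), where u = u]) (auto simp: u_def)
  then show thesis
    using that \<open>t > 0\<close> \<open>x + t *\<^sub>R d \<in> S\<close> d(1) d_lost by blast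
qed

lemma extreme_point_if_two_sided_directions_trivial:
  assumes "convex S" "x \<in> S" "two_sided_directions S x \<subseteq> {0}"
  shows "x extreme_point_of S"
proof -
  have False if ab: "a \<in> S" "b \<in> S" "x \<in> open_segment a b" for a b
  proof -
    obtain u where u: "a \<noteq> b" "0 < u" "u < 1" "x = (1 - u) *\<^sub>R a + u *\<^sub>R b"
      using ab(3) by (auto simp: in_segment)
    define e where "e = min u (1 - u)"
    have "x + (1 - u) *\<^sub>R (b - a) = b" "x + u *\<^sub>R (- (b - a)) = a"
      using u(4) by (simp_all add: algebra_simps)
    then have "x + (1 - u) *\<^sub>R (b - a) \<in> S" "x + u *\<^sub>R (- (b - a)) \<in> S"
      using ab by simp_all
    then have "x + e *\<^sub>R (b - a) \<in> S" "x + e *\<^sub>R (- (b - a)) \<in> S"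
      using u(2,3) by (auto simp: e_def intro: convex_shorter_step[OF assms(1,2)])
    moreover have "e > 0" using u(2,3) by (simp add: e_def)
    ultimately have "b - a \<in> two_sided_directions S x"
      unfolding two_sided_directions_def by (auto simp: algebra_simps)
    then show False using assms(3) u(1) by auto
  qed
  then show ?thesis using assms(2) by (auto simp: extreme_point_of_def)
qed

lemma convex_mem_between:
  assumes "convex C" "x + a *\<^sub>R d \<in> C" "x - b *\<^sub>R d \<in> C" "0 < a" "0 < b"
  shows "x \<in> C"
proof -
  have "x = (b / (a + b)) *\<^sub>R (x + a *\<^sub>R d) + (a / (a + b)) *\<^sub>R (x - b *\<^sub>R d)"
  proof -
    have "b / (a + b) + a / (a + b) = 1" using assms(4,5) by (simp add: add_divide_distrib[symmetric])
    then show ?thesis using assms(4,5) by (simp add: algebra_simps flip: scaleR_add_left)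
  qed
  also have "\<dots> \<in> C"
    using assms by (intro convexD) (auto simp: add_divide_distrib[symmetric])
  finally show ?thesis .
qed

text \<open>Minkowski's theorem (the library's \<open>Krein_Milman_Minkowski\<close> is stated for
  \<open>euclidean_space\<close> only). Induction on the dimension of the two-sided directions at \<open>x\<close>:
  moving \<open>x\<close> both ways along such a direction up to the boundary, the dimension drops.\<close>

theorem convex_hull_extreme_points_finite_dim:
  fixes S B :: "'a::real_normed_vector set"
  assumes fin: "finite B" "span B = UNIV" and S: "convex S" "closed S" "bounded S"
  shows "S \<subseteq> convex hull {x. x extreme_point_of S}"
proof
  fix x assume "x \<in> S"
  then show "x \<in> convex hull {x. x extreme_point_of S}"
  proof (induction "dim (two_sided_directions S x)" arbitrary: x rule: less_induct)
    case less
    show ?case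
    proof (cases "two_sided_directions S x \<subseteq> {0}")
      case True
      then show ?thesis
        using extreme_point_if_two_sided_directions_trivial[OF S(1) less.prems] by (simp add: hull_inc)
    next
      case False
      then obtain d where d: "d \<in> two_sided_directions S x" "d \<noteq> 0" by auto
      have "- d \<in> two_sided_directions S x" "- d \<noteq> 0"
        using d by (auto simp: two_sided_directions_uminus)
      have hull: "y \<in> convex hull {x. x extreme_point_of S}"
        if "y \<in> S" "two_sided_directions S y \<subset> two_sided_directions S x" for y
      proof (rule less.hyps[OF _ that(1)])
        have "subspace (two_sided_directions S y)" "subspace (two_sided_directions S x)"
          using subspace_two_sided_directions[OF S(1)] that(1) less.prems by blast+
        then have "span (two_sided_directions S y) \<subset> span (two_sided_directions S x)"
          using that(2) by (simp add: span_eq_iff[THEN iffD2])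
        then show "dim (two_sided_directions S y) < dim (two_sided_directions S x)"
          by (rule dim_psubset_finite_span[OF fin])
      qed
      obtain t1 where t1: "t1 > 0" "x + t1 *\<^sub>R d \<in> S"
        "two_sided_directions S (x + t1 *\<^sub>R d) \<subset> two_sided_directions S x"
        using two_sided_directions_drop_at_boundary[OF S less.prems d] .
      obtain t0 where t0: "t0 > 0" "x + t0 *\<^sub>R (- d) \<in> S"
        "two_sided_directions S (x + t0 *\<^sub>R (- d)) \<subset> two_sided_directions S x"
        using two_sided_directions_drop_at_boundary[OF S less.prems \<open>- d \<in> _\<close> \<open>- d \<noteq> 0\<close>] .
      have "x + t1 *\<^sub>R d \<in> convex hull {x. x extreme_point_of S}"
        using hull[OF t1(2,3)] .
      moreover have "x - t0 *\<^sub>R d \<in> convex hull {x. x extreme_point_of S}"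
        using hull[OF t0(2,3)] by simp
      ultimately show ?thesis
        using convex_mem_between[OF convex_convex_hull _ _ t1(1) t0(1)] by blast
    qed
  qed
qed

lemma extreme_point_of_cball_norm_le:
  "e extreme_point_of cball (0::'a::real_normed_vector) 1 \<Longrightarrow> norm e \<le> 1"
  by (simp add: extreme_point_of_def)

lemma norm_le_if_extreme_points:
  fixes L :: "'a::real_normed_vector \<Rightarrow> 'b::real_normed_vector" and B :: "'a set"
  assumes "finite B" "span B = UNIV" "linear L"
    and "\<And>e. e extreme_point_of cball 0 1 \<Longrightarrow> norm (L e) \<le> c"
  shows "norm (L x) \<le> c * norm x"
proof -
  have "{e. e extreme_point_of cball 0 1} \<subseteq> L -` cball 0 c"
    using assms(4) by auto
  then have "convex hull {e. e extreme_point_of cball 0 1} \<subseteq> L -` cball 0 c"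
    by (intro hull_minimal convex_linear_vimage assms(3) convex_cball)
  moreover have "cball 0 1 \<subseteq> convex hull {e. e extreme_point_of cball (0::'a) 1}"
    using convex_hull_extreme_points_finite_dim[OF assms(1,2) convex_cball closed_cball bounded_cball] .
  ultimately have ball: "norm (L y) \<le> c" if "norm y \<le> 1" for y
    using that by fastforce
  show ?thesis
  proof (cases "x = 0")
    case True
    then show ?thesis using linear_0[OF assms(3)] by simp
  next
    case False
    have "norm (L x) / norm x = norm (L ((1 / norm x) *\<^sub>R x))"
      using linear_scale[OF assms(3)] by simp
    also have "\<dots> \<le> c" using False by (intro ball) simp
    finally show ?thesis using False by (simp add: field_simps)
  qed
qed

lemma bounded_linear_if_polyhedral:
  fixes L :: "'a::real_normed_vector \<Rightarrow> 'b::real_normed_vector" and B :: "'a set"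
  assumes "finite B" "span B = UNIV" "polyhedral_space TYPE('a)" "linear L"
  shows "bounded_linear L"
proof -
  let ?Ext = "{e::'a. e extreme_point_of cball 0 1}"
  have "finite ?Ext" using assms(3) by (simp add: polyhedral_space_def)
  then have "norm (L e) \<le> (\<Sum>e\<in>?Ext. norm (L e))" if "e extreme_point_of cball 0 1" for e
    using that by (intro member_le_sum) auto
  then have "norm (L x) \<le> (\<Sum>e\<in>?Ext. norm (L e)) * norm x" for x
    by (rule norm_le_if_extreme_points[OF assms(1,2,4)])
  then have "norm (L x) \<le> norm x * (\<Sum>e\<in>?Ext. norm (L e))" for x
    by (simp add: mult.commute)
  then show ?thesis
    using assms(4) unfolding bounded_linear_def bounded_linear_axioms_def by blast
qed

lemma norm_add_scaleR_le_1:
  fixes y z :: "'a::real_normed_vector"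
  assumes "norm (y + z) \<le> 1" "norm (y - z) \<le> 1" "\<bar>t\<bar> \<le> 1"
  shows "norm (y + t *\<^sub>R z) \<le> 1"
proof -
  have "y + t *\<^sub>R z = ((1 - t) / 2 + (1 + t) / 2) *\<^sub>R y + ((1 + t) / 2 - (1 - t) / 2) *\<^sub>R z"
    by (simp add: field_simps)
  also have "\<dots> = ((1 - t) / 2) *\<^sub>R (y - z) + ((1 + t) / 2) *\<^sub>R (y + z)"
    by (simp add: algebra_simps)
  also have "\<dots> \<in> cball 0 1"
    using assms by (intro convexD[OF convex_cball]) (auto simp: field_simps)
  finally show ?thesis by simp
qed

section \<open>Faces and edges of the unit ball\<close>

lemma unit_ball_face_norm:
  assumes "unit_ball_face F" "x \<in> F"
  shows "norm x = 1"
proof -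
  have "F \<subseteq> sphere 0 1" using assms(1) unfolding unit_ball_face_def by (rule conjunct1)
  then show ?thesis using assms(2) by auto
qed

lemma unit_ball_face_extremal:
  assumes "unit_ball_face F" "norm x1 = 1" "norm x2 = 1" "0 < t" "t < 1"
    and "(1 - t) *\<^sub>R x1 + t *\<^sub>R x2 \<in> F"
  shows "x1 \<in> F \<and> x2 \<in> F"
proof -
  have "\<forall>x1 x2 t. norm x1 = 1 \<and> norm x2 = 1 \<and> 0 < t \<and> t < 1 \<and>
      (1 - t) *\<^sub>R x1 + t *\<^sub>R x2 \<in> F \<longrightarrow> x1 \<in> F \<and> x2 \<in> F"
    using assms(1) unfolding unit_ball_face_def by (rule conjunct2[THEN conjunct2])
  then show ?thesis using assms(2-) by blast
qed

lemma face_symmetric_perturbation: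
  assumes "unit_ball_face F" "T \<in> F" "norm (T + S) \<le> 1" "norm (T - S) \<le> 1"
  shows "T + S \<in> F \<and> T - S \<in> F"
proof -
  have "(T + S) + (T - S) = 2 *\<^sub>R T" by (simp add: scaleR_2)
  then have "2 \<le> norm (T + S) + norm (T - S)"
    using norm_triangle_ineq[of "T + S" "T - S"] unit_ball_face_norm[OF assms(1,2)] by simp
  then have "norm (T + S) = 1" "norm (T - S) = 1" using assms(3,4) by linarith+
  moreover have "(1 - 1/2) *\<^sub>R (T + S) + (1/2) *\<^sub>R (T - S) = T"
    by (simp add: algebra_simps flip: scaleR_add_left)
  ultimately show ?thesis
    using unit_ball_face_extremal[OF assms(1), of "T + S" "T - S" "1/2"] assms(2) by simp
qed

lemma edge_symmetric_perturbations_collinear: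
  assumes "unit_ball_edge E" "T \<in> E"
    and "norm (T + S1) \<le> 1" "norm (T - S1) \<le> 1" "norm (T + S2) \<le> 1" "norm (T - S2) \<le> 1"
    and "S2 \<noteq> 0"
  shows "S1 \<in> span {S2}"
proof -
  let ?Diff = "{v - w | v w. v \<in> E \<and> w \<in> E}"
  have face: "unit_ball_face E" and dim: "dim (span ?Diff) = 1"
    using assms(1) unfolding unit_ball_edge_def face_dim_def by simp_all
  obtain d where "span (span ?Diff) = span {d}"
    using dim_eq_1_imp_span_singleton[OF dim] by blast
  then have d: "span ?Diff = span {d}" by (simp add: span_span)
  have "S \<in> span {d}" if "norm (T + S) \<le> 1" "norm (T - S) \<le> 1" for S
  proof -
    have "(T + S) - (T - S) \<in> ?Diff"
      using face_symmetric_perturbation[OF face assms(2) that] by blast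
    then have "(1/2) *\<^sub>R ((T + S) - (T - S)) \<in> span ?Diff"
      by (intro span_mul span_base)
    moreover have "(1/2) *\<^sub>R ((T + S) - (T - S)) = S"
      by (simp add: scaleR_2[symmetric])
    ultimately show ?thesis using d by simp
  qed
  then obtain a b where "S1 = a *\<^sub>R d" "S2 = b *\<^sub>R d"
    using assms(3-6) unfolding span_singleton by blast
  then have "S1 = (a / b) *\<^sub>R S2" using assms(7) by auto
  then show ?thesis by (simp add: span_mul span_base)
qed

lemma rel_interior_edge_symmetric_pair:
  assumes "unit_ball_edge E" "T \<in> rel_interior E"
  obtains D where "D \<noteq> 0" "T + D \<in> E" "T - D \<in> E"
proof -
  obtain r where r: "r > 0" "ball T r \<inter> affine hull E \<subseteq> E" "T \<in> E"
    using assms(2) by (auto simp: mem_rel_interior_ball)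
  obtain P Q where PQ: "P \<in> E" "Q \<in> E" "P \<noteq> Q"
  proof -
    let ?Diff = "{v - w | v w. v \<in> E \<and> w \<in> E}"
    have "dim (span ?Diff) = 1"
      using assms(1) unfolding unit_ball_edge_def face_dim_def by simp
    then obtain d where "d \<noteq> 0" "span (span ?Diff) = span {d}"
      using dim_eq_1_imp_span_singleton by blast
    then have "\<not> ?Diff \<subseteq> {0}"
      using span_mono[of ?Diff "{0}"] span_base[of d "{d}"] by (auto simp: span_span)
    then obtain v w where "v \<in> E" "w \<in> E" "v - w \<noteq> 0" by blast
    then show thesis using that by simp
  qed
  define D where "D = (r / (2 * norm (P - Q))) *\<^sub>R (P - Q)"
  have "D \<noteq> 0" "norm D < r" using PQ r(1) by (auto simp: D_def)
  moreover have "T + c *\<^sub>R (P - Q) \<in> affine hull E" for c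
    using PQ r(3) by (intro mem_affine_3_minus affine_affine_hull) (auto intro: hull_inc)
  then have "T + D \<in> affine hull E" "T + (- r / (2 * norm (P - Q))) *\<^sub>R (P - Q) \<in> affine hull E"
    unfolding D_def by blast+
  then have "T + D \<in> affine hull E" "T - D \<in> affine hull E"
    by (simp_all add: D_def)
  moreover have "T + D \<in> ball T r" "T - D \<in> ball T r"
    using \<open>norm D < r\<close> by (simp_all add: dist_norm)
  ultimately show thesis
    using r(2) that by blast
qed

section \<open>Feasible directions of an operator\<close>

definition norming_extreme_points :: "('a::real_normed_vector \<Rightarrow>\<^sub>L 'b::real_normed_vector) \<Rightarrow> 'a set" where
  "norming_extreme_points T = {e. e extreme_point_of cball 0 1 \<and> norm (T e) = 1}"

definition feasible_direction :: "('a::real_normed_vector \<Rightarrow>\<^sub>L 'b::real_normed_vector) \<Rightarrow> ('a \<Rightarrow>\<^sub>L 'b) \<Rightarrow> bool" where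
  "feasible_direction T P \<longleftrightarrow>
     (\<forall>e \<in> norming_extreme_points T. \<forall>\<^sub>F s in nhds 0. norm (T e + s *\<^sub>R P e) \<le> 1)"

text \<open>At the extreme points with \<open>\<parallel>T e\<parallel> < 1\<close> every small step is harmless, and there
  are only finitely many extreme points.\<close>

lemma symmetric_step_if_feasible_direction:
  fixes T P :: "'a::real_normed_vector \<Rightarrow>\<^sub>L 'b::real_normed_vector" and B :: "'a set"
  assumes fin: "finite B" "span B = UNIV" and "polyhedral_space TYPE('a)"
    and "norm T \<le> 1" "feasible_direction T P"
  obtains \<epsilon> where "\<epsilon> > 0" "norm (T + \<epsilon> *\<^sub>R P) \<le> 1" "norm (T - \<epsilon> *\<^sub>R P) \<le> 1"
proof -
  let ?Ext = "{e::'a. e extreme_point_of cball 0 1}"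
  have "\<forall>\<^sub>F s in nhds 0. norm (T e + s *\<^sub>R P e) \<le> 1" if "e \<in> ?Ext" for e
  proof (cases "norm (T e) = 1")
    case True
    then show ?thesis
      using assms(5) that by (simp add: feasible_direction_def norming_extreme_points_def)
  next
    case False
    have "norm (T e) \<le> norm T * norm e" by (rule norm_blinfun)
    also have "\<dots> \<le> 1"
      using assms(4) extreme_point_of_cball_norm_le[of e] that by (simp add: mult_le_one)
    finally have "norm (T e) < 1" using False by simp
    moreover have "((\<lambda>s. norm (T e + s *\<^sub>R P e)) \<longlongrightarrow> norm (T e + 0 *\<^sub>R P e)) (nhds 0)"
      by (intro tendsto_intros filterlim_ident)
    ultimately have "\<forall>\<^sub>F s in nhds 0. norm (T e + s *\<^sub>R P e) < 1"
      by (simp add: order_tendstoD(2))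
    then show ?thesis by (rule eventually_mono) simp
  qed
  then have "\<forall>\<^sub>F s in nhds 0. \<forall>e\<in>?Ext. norm (T e + s *\<^sub>R P e) \<le> 1"
    using assms(3) by (intro eventually_ball_finite) (auto simp: polyhedral_space_def)
  then obtain d where "d > 0" and d: "\<And>s e. \<bar>s\<bar> < d \<Longrightarrow> e \<in> ?Ext \<Longrightarrow> norm (T e + s *\<^sub>R P e) \<le> 1"
    by (auto simp: eventually_nhds_metric dist_real_def)
  have "norm (T + s *\<^sub>R P) \<le> 1" if "\<bar>s\<bar> < d" for s
  proof (rule norm_blinfun_bound)
    show "norm ((T + s *\<^sub>R P) x) \<le> 1 * norm x" for x
      using d[OF that]
      by (intro norm_le_if_extreme_points[OF fin bounded_linear.linear[OF blinfun.bounded_linear_right]])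
        (simp add: blinfun.add_left blinfun.scaleR_left)
  qed simp
  from this[of "d/2"] this[of "- d/2"] \<open>d > 0\<close> show thesis
    by (intro that[of "d/2"]) auto
qed

lemma feasible_directions_collinear_at_edge:
  fixes T P1 P2 :: "'a::real_normed_vector \<Rightarrow>\<^sub>L 'b::real_normed_vector" and B :: "'a set"
  assumes fin: "finite B" "span B = UNIV" "polyhedral_space TYPE('a)"
    and E: "unit_ball_edge E" "T \<in> E"
    and P: "feasible_direction T P1" "feasible_direction T P2" "P2 \<noteq> 0"
  shows "P1 \<in> span {P2}"
proof -
  have "unit_ball_face E" using E(1) by (simp add: unit_ball_edge_def)
  then have "norm T \<le> 1" using unit_ball_face_norm[OF _ E(2)] by simp
  obtain \<epsilon>1 where \<epsilon>1: "\<epsilon>1 > 0" "norm (T + \<epsilon>1 *\<^sub>R P1) \<le> 1" "norm (T - \<epsilon>1 *\<^sub>R P1) \<le> 1"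
    using symmetric_step_if_feasible_direction[OF fin \<open>norm T \<le> 1\<close> P(1)] .
  obtain \<epsilon>2 where \<epsilon>2: "\<epsilon>2 > 0" "norm (T + \<epsilon>2 *\<^sub>R P2) \<le> 1" "norm (T - \<epsilon>2 *\<^sub>R P2) \<le> 1"
    using symmetric_step_if_feasible_direction[OF fin \<open>norm T \<le> 1\<close> P(2)] .
  have "\<epsilon>1 *\<^sub>R P1 \<in> span {\<epsilon>2 *\<^sub>R P2}"
    using \<epsilon>1 \<epsilon>2 P(3) by (intro edge_symmetric_perturbations_collinear[OF E]) auto
  then obtain c where "\<epsilon>1 *\<^sub>R P1 = c *\<^sub>R (\<epsilon>2 *\<^sub>R P2)"
    by (auto simp: span_singleton)
  then have "\<epsilon>1 *\<^sub>R P1 \<in> span {P2}"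
    by (simp add: span_mul span_base)
  then have "(1 / \<epsilon>1) *\<^sub>R (\<epsilon>1 *\<^sub>R P1) \<in> span {P2}"
    by (rule span_mul)
  then show ?thesis using \<epsilon>1(1) by simp
qed

lemma blinfun_apply_Blinfun_rank_one:
  fixes k :: "'a::real_normed_vector \<Rightarrow> real" and z :: "'b::real_normed_vector" and B :: "'a set"
  assumes "finite B" "span B = UNIV" "polyhedral_space TYPE('a)" "linear k"
  shows "blinfun_apply (Blinfun (\<lambda>x. k x *\<^sub>R z)) x = k x *\<^sub>R z"
proof -
  have "linear (\<lambda>x. k x *\<^sub>R z)"
    by (simp add: linear_iff linear_add[OF assms(4)] linear_scale[OF assms(4)] algebra_simps)
  then show ?thesis
    by (simp add: bounded_linear_Blinfun_apply bounded_linear_if_polyhedral[OF assms(1-3)])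
qed

lemma blinfun_eq_0_if_zero_on_spanning:
  fixes D :: "'a::real_normed_vector \<Rightarrow>\<^sub>L 'b::real_normed_vector"
  assumes "span S = UNIV" "\<forall>x \<in> S. D x = 0"
  shows "D = 0"
proof (rule blinfun_eqI)
  fix x
  show "D x = blinfun_apply 0 x"
    using linear_eq_0_on_span[OF bounded_linear.linear[OF blinfun.bounded_linear_right], of S D x]
      assms by simp
qed

lemma feasible_pair_if_norming_points_not_spanning:
  fixes T :: "'a::real_normed_vector \<Rightarrow>\<^sub>L 'b::real_normed_vector" and B :: "'a set"
  assumes fin: "finite B" "span B = UNIV" "polyhedral_space TYPE('a)"
    and "dim (UNIV::'b set) > 1" "span (norming_extreme_points T) \<noteq> UNIV"
  obtains P1 P2 where "feasible_direction T P1" "feasible_direction T P2" "P1 \<notin> span {P2}" "P2 \<noteq> 0"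
proof -
  obtain v where "v \<notin> span (norming_extreme_points T)" using assms(5) by auto
  then obtain h :: "'a \<Rightarrow> real"
    where h: "linear h" "h v = 1" "\<forall>x \<in> span (norming_extreme_points T). h x = 0"
    by (rule exists_linear_functional_separating)
  obtain z1 z2 :: 'b where z: "z1 \<notin> span {z2}" "z2 \<notin> span {z1}"
    using assms(4) by (rule exists_noncollinear_pair)
  define P where "P z = Blinfun (\<lambda>x. h x *\<^sub>R z)" for z :: 'b
  have P_apply: "P z x = h x *\<^sub>R z" for z x
    unfolding P_def by (rule blinfun_apply_Blinfun_rank_one[OF fin h(1)])
  have "feasible_direction T (P z)" for z
    unfolding feasible_direction_def
  proof
    fix e assume e: "e \<in> norming_extreme_points T"
    then have "h e = 0" using h(3) span_base by blast
    moreover have "norm (T e) = 1" using e by (simp add: norming_extreme_points_def)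
    ultimately show "\<forall>\<^sub>F s in nhds 0. norm (T e + s *\<^sub>R P z e) \<le> 1"
      by (simp add: P_apply)
  qed
  moreover have "P z1 \<notin> span {P z2}"
  proof
    assume "P z1 \<in> span {P z2}"
    then obtain c where "P z1 = c *\<^sub>R P z2" by (auto simp: span_singleton)
    then have "P z1 v = c *\<^sub>R P z2 v" by (simp add: blinfun.scaleR_left)
    then have "z1 = c *\<^sub>R z2" by (simp add: P_apply h(2))
    then show False using z(1) by (simp add: span_mul span_base)
  qed
  moreover have "P z2 \<noteq> 0"
  proof
    assume "P z2 = 0"
    then have "z2 = 0" using P_apply[of z2 v] h(2) by simp
    then show False using z(2) span_zero by blast
  qed
  ultimately show thesis using that by blast
qed

lemma rank_one_norming_values:
  fixes T :: "'a::real_normed_vector \<Rightarrow>\<^sub>L 'b::real_normed_vector"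
  assumes "dim (range (blinfun_apply T)) = 1"
    and "e \<in> norming_extreme_points T" "e' \<in> norming_extreme_points T"
  shows "T e = T e' \<or> T e = - T e'"
proof -
  obtain y where "span (range (blinfun_apply T)) = span {y}"
    using dim_eq_1_imp_span_singleton[OF assms(1)] by blast
  then have "T x \<in> span {y}" for x by (metis rangeI span_base)
  then show ?thesis
    using assms(2,3) by (intro span_singleton_norm_eq) (auto simp: norming_extreme_points_def)
qed

lemma feasible_direction_rank_one:
  fixes T :: "'a::real_normed_vector \<Rightarrow>\<^sub>L 'b::real_normed_vector" and B :: "'a set"
  assumes fin: "finite B" "span B = UNIV" "polyhedral_space TYPE('a)"
    and "dim (range (blinfun_apply T)) = 1" "e0 \<in> norming_extreme_points T"
    and z: "norm (T e0 + z) \<le> 1" "norm (T e0 - z) \<le> 1"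
    and "linear k"
  shows "feasible_direction T (Blinfun (\<lambda>x. k x *\<^sub>R z))"
  unfolding feasible_direction_def
proof
  fix e assume e: "e \<in> norming_extreme_points T"
  have "((\<lambda>s. \<bar>s * k e\<bar>) \<longlongrightarrow> \<bar>0 * k e\<bar>) (nhds 0)"
    by (intro tendsto_intros filterlim_ident)
  then have "\<forall>\<^sub>F s in nhds 0. \<bar>s * k e\<bar> < 1"
    by (simp add: order_tendstoD(2))
  then show "\<forall>\<^sub>F s in nhds 0. norm (T e + s *\<^sub>R Blinfun (\<lambda>x. k x *\<^sub>R z) e) \<le> 1"
  proof (rule eventually_mono)
    fix s assume "\<bar>s * k e\<bar> < 1"
    then have "norm (T e0 + (s * k e) *\<^sub>R z) \<le> 1" "norm (T e0 + (- (s * k e)) *\<^sub>R z) \<le> 1"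
      using norm_add_scaleR_le_1[OF z, of "s * k e"] norm_add_scaleR_le_1[OF z, of "- (s * k e)"]
      by simp_all
    moreover have "norm (- T e0 + (s * k e) *\<^sub>R z) = norm (T e0 + (- (s * k e)) *\<^sub>R z)"
      by (metis minus_add_distrib minus_minus norm_minus_cancel scaleR_minus_left)
    ultimately show "norm (T e + s *\<^sub>R Blinfun (\<lambda>x. k x *\<^sub>R z) e) \<le> 1"
      using rank_one_norming_values[OF assms(4) e assms(5)]
      by (auto simp: blinfun_apply_Blinfun_rank_one[OF fin assms(8)])
  qed
qed

text \<open>Every norming extreme point is sent to \<open>\<plusminus>T e0\<close>, so all of them can be pushed
  along the single vector \<open>z = D e0\<close>, with an arbitrary functional as profile.\<close>

lemma feasible_pair_if_rank_one:
  fixes T D :: "'a::real_normed_vector \<Rightarrow>\<^sub>L 'b::real_normed_vector" and B :: "'a set"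
  assumes fin: "finite B" "span B = UNIV" "polyhedral_space TYPE('a)"
    and "dim (UNIV::'a set) > 1" "span (norming_extreme_points T) = UNIV"
    and "dim (range (blinfun_apply T)) = 1"
    and "D \<noteq> 0" "norm (T + D) \<le> 1" "norm (T - D) \<le> 1"
  obtains P1 P2 where "feasible_direction T P1" "feasible_direction T P2" "P1 \<notin> span {P2}" "P2 \<noteq> 0"
proof -
  obtain e0 where e0: "e0 \<in> norming_extreme_points T" "D e0 \<noteq> 0"
    using blinfun_eq_0_if_zero_on_spanning[OF assms(5)] assms(7) by blast
  define z where "z = D e0"
  have "norm e0 \<le> 1"
    using e0(1) by (simp add: norming_extreme_points_def extreme_point_of_cball_norm_le)
  then have "norm (T + D) * norm e0 \<le> 1" "norm (T - D) * norm e0 \<le> 1"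
    using assms(8,9) by (simp_all add: mult_le_one)
  then have z: "norm (T e0 + z) \<le> 1" "norm (T e0 - z) \<le> 1"
    using norm_blinfun[of "T + D" e0] norm_blinfun[of "T - D" e0]
    by (simp_all add: z_def blinfun.add_left blinfun.diff_left)
  note feasible = feasible_direction_rank_one[OF fin assms(6) e0(1) z]
  obtain u1 u2 :: 'a where u: "u1 \<notin> span {u2}" "u2 \<notin> span {u1}"
    using assms(4) by (rule exists_noncollinear_pair)
  obtain k1 :: "'a \<Rightarrow> real" where k1: "linear k1" "k1 u1 = 1" "\<forall>x \<in> span {u2}. k1 x = 0"
    using u(1) by (rule exists_linear_functional_separating)
  obtain k2 :: "'a \<Rightarrow> real" where k2: "linear k2" "k2 u2 = 1" "\<forall>x \<in> span {u1}. k2 x = 0"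
    using u(2) by (rule exists_linear_functional_separating)
  define P1 where "P1 = Blinfun (\<lambda>x. k1 x *\<^sub>R z)"
  define P2 where "P2 = Blinfun (\<lambda>x. k2 x *\<^sub>R z)"
  have P: "P1 u1 = z" "P2 u1 = 0" "P2 u2 = z"
    using k1 k2 span_base[of u1 "{u1}"]
    by (simp_all add: P1_def P2_def blinfun_apply_Blinfun_rank_one[OF fin])
  have "z \<noteq> 0" using e0(2) by (simp add: z_def)
  have "P1 \<notin> span {P2}"
  proof
    assume "P1 \<in> span {P2}"
    then obtain c where "P1 = c *\<^sub>R P2" by (auto simp: span_singleton)
    then have "P1 u1 = c *\<^sub>R P2 u1" by (simp add: blinfun.scaleR_left)
    then show False using P \<open>z \<noteq> 0\<close> by simp
  qed
  moreover have "P2 \<noteq> 0" using P \<open>z \<noteq> 0\<close> by auto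
  ultimately show thesis
    using that feasible[OF k1(1)] feasible[OF k2(1)] by (simp add: P1_def P2_def)
qed

theorem mainTheorem17:
  fixes T :: "'a::banach \<Rightarrow>\<^sub>L 'b::banach"
    and E :: "('a \<Rightarrow>\<^sub>L 'b) set"
  assumes "\<exists>B::'a set. finite B \<and> span B = UNIV"
    and "\<exists>B::'b set. finite B \<and> span B = UNIV"
    and "polyhedral_space TYPE('a)"
    and "polyhedral_space TYPE('b)"
    and "min (dim (UNIV::'a set)) (dim (UNIV::'b set)) > 1"
    and "unit_ball_edge E"
    and "dim (range (blinfun_apply T)) = 1"
  shows "T \<notin> rel_interior E"
proof
  assume "T \<in> rel_interior E"
  then obtain D where D: "D \<noteq> 0" "T + D \<in> E" "T - D \<in> E"
    using assms(6) rel_interior_edge_symmetric_pair by blast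
  have "T \<in> E" using \<open>T \<in> rel_interior E\<close> rel_interior_subset by blast
  obtain B :: "'a set" where B: "finite B" "span B = UNIV" using assms(1) by blast
  have "unit_ball_face E" using assms(6) by (simp add: unit_ball_edge_def)
  then have "norm (T + D) \<le> 1" "norm (T - D) \<le> 1"
    using unit_ball_face_norm[OF _ D(2)] unit_ball_face_norm[OF _ D(3)] by simp_all
  obtain P1 P2 where P: "feasible_direction T P1" "feasible_direction T P2" "P1 \<notin> span {P2}" "P2 \<noteq> 0"
  proof (cases "span (norming_extreme_points T) = UNIV")
    case True
    with assms(5,7) D(1) \<open>norm (T + D) \<le> 1\<close> \<open>norm (T - D) \<le> 1\<close> show thesis
      using feasible_pair_if_rank_one[OF B assms(3)] that by auto
  next
    case False
    with assms(5) show thesis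
      using feasible_pair_if_norming_points_not_spanning[OF B assms(3)] that by auto
  qed
  then have "P1 \<in> span {P2}"
    using feasible_directions_collinear_at_edge[OF B assms(3,6) \<open>T \<in> E\<close>] by blast
  with P(3) show False ..
qed

end
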